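(* Let $N=\ker\psi\subseteq G_3$. Then $\beta(N)\supseteq A_{12}$, the alternating group on the twelve edge positions.
   Context: The $3\times3\times3$ Rubik's cube consists of 8 corner cubelets (3 stickers each), 12 edge cubelets (2 stickers each) and 6 face-center cubelets. $G_3$ is the group of permutations of the 48 corner and edge stickers generated by the six moves $u_3,d_3,f_3,b_3,l_3,r_3$ rotating respectively the top, bottom, front, back, left, right layer of nine cubelets by $90^\circ$ clockwise as seen from outside facing that face. $G_2$ is the analogous group for the $2\times2\times2$ cube (8 corner cubelets, 24 stickers) with generators $u_2,\dots,r_2$, and $\psi:G_3\to G_2$ is the homomorphism with $u_3\mapsto u_2$, $d_3\mapsto d_2$, etc. (it records the action on corner stickers). $\beta:G_3\to S_{12}$ records the permutation of the 12 edge positions. *)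

theory Defs
  imports Main "HOL-Combinatorics.Permutations"
begin

text \<open>Cubelet positions are integer vectors in
{-1,0,1}^3 (x = right, y = up, z = front). A sticker is a pair (position, outward
normal of the face of the cubelet carrying it), the normal being a signed unit
axis vector.\<close>

type_synonym vec = "int \<times> int \<times> int"
type_synonym sticker = "vec \<times> vec"

fun dot :: "vec \<Rightarrow> vec \<Rightarrow> int" where
  "dot (a1, a2, a3) (b1, b2, b3) = a1 * b1 + a2 * b2 + a3 * b3"

fun cross :: "vec \<Rightarrow> vec \<Rightarrow> vec" where
  "cross (a1, a2, a3) (b1, b2, b3) = (a2 * b3 - a3 * b2, a3 * b1 - a1 * b3, a1 * b2 - a2 * b1)"

fun scale :: "int \<Rightarrow> vec \<Rightarrow> vec" where
  "scale c (a1, a2, a3) = (c * a1, c * a2, c * a3)"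

fun vadd :: "vec \<Rightarrow> vec \<Rightarrow> vec" where
  "vadd (a1, a2, a3) (b1, b2, b3) = (a1 + b1, a2 + b2, a3 + b3)"

fun nz :: "vec \<Rightarrow> nat" where
  "nz (a1, a2, a3) = (if a1 \<noteq> 0 then 1 else 0) + (if a2 \<noteq> 0 then 1 else 0) + (if a3 \<noteq> 0 then 1 else 0)"

definition Pos :: "vec set" where
  "Pos = {(x, y, z). x \<in> {-1, 0, 1} \<and> y \<in> {-1, 0, 1} \<and> z \<in> {-1, 0, 1}}"

definition Axes :: "vec set" where
  "Axes = {(1,0,0), (-1,0,0), (0,1,0), (0,-1,0), (0,0,1), (0,0,-1)}"

text \<open>Corner stickers (24) and edge stickers (24): the face normal points in the
direction of a nonzero coordinate of the cubelet position.\<close>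
definition CornerStickers :: "sticker set" where
  "CornerStickers = {(p, d). p \<in> Pos \<and> nz p = 3 \<and> d \<in> Axes \<and> dot p d = 1}"

definition EdgeStickers :: "sticker set" where
  "EdgeStickers = {(p, d). p \<in> Pos \<and> nz p = 2 \<and> d \<in> Axes \<and> dot p d = 1}"

definition Stickers :: "sticker set" where
  "Stickers = CornerStickers \<union> EdgeStickers"

definition EdgePos :: "vec set" where
  "EdgePos = {p \<in> Pos. nz p = 2}"

text \<open>Rotation by 90 degrees clockwise as seen from outside, looking at the face with
outward normal n (i.e. by -90 degrees about n): v \<mapsto> (v.n) n + v \<times> n.\<close>
definition rot :: "vec \<Rightarrow> vec \<Rightarrow> vec" where
  "rot n v = vadd (scale (dot v n) n) (cross v n)"

definition turn :: "sticker set \<Rightarrow> vec \<Rightarrow> sticker \<Rightarrow> sticker" where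
  "turn S n s = (if s \<in> S \<and> dot (fst s) n = 1 then (rot n (fst s), rot n (snd s)) else s)"

definition nU :: vec where "nU = (0, 1, 0)"
definition nD :: vec where "nD = (0, -1, 0)"
definition nF :: vec where "nF = (0, 0, 1)"
definition nB :: vec where "nB = (0, 0, -1)"
definition nL :: vec where "nL = (-1, 0, 0)"
definition nR :: vec where "nR = (1, 0, 0)"

inductive_set gen_group :: "('a \<Rightarrow> 'a) set \<Rightarrow> ('a \<Rightarrow> 'a) set" for gs where
  gen_id: "id \<in> gen_group gs"
| gen_mult: "g \<in> gen_group gs \<Longrightarrow> m \<in> gs \<Longrightarrow> m \<circ> g \<in> gen_group gs"
| gen_inv: "g \<in> gen_group gs \<Longrightarrow> m \<in> gs \<Longrightarrow> inv m \<circ> g \<in> gen_group gs"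

definition u3 where "u3 = turn Stickers nU"
definition d3 where "d3 = turn Stickers nD"
definition f3 where "f3 = turn Stickers nF"
definition b3 where "b3 = turn Stickers nB"
definition l3 where "l3 = turn Stickers nL"
definition r3 where "r3 = turn Stickers nR"

definition G3 :: "(sticker \<Rightarrow> sticker) set" where
  "G3 = gen_group {u3, d3, f3, b3, l3, r3}"

text \<open>The 2x2x2 cube: its 24 stickers are identified with the corner stickers.\<close>
definition u2 where "u2 = turn CornerStickers nU"
definition d2 where "d2 = turn CornerStickers nD"
definition f2 where "f2 = turn CornerStickers nF"
definition b2 where "b2 = turn CornerStickers nB"
definition l2 where "l2 = turn CornerStickers nL"
definition r2 where "r2 = turn CornerStickers nR"

definition G2 :: "(sticker \<Rightarrow> sticker) set" where
  "G2 = gen_group {u2, d2, f2, b2, l2, r2}"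

text \<open>psi : G3 \<rightarrow> G2 records the action on the corner stickers
(so psi u3 = u2, etc.).\<close>
definition psi :: "(sticker \<Rightarrow> sticker) \<Rightarrow> (sticker \<Rightarrow> sticker)" where
  "psi g = (\<lambda>s. if s \<in> CornerStickers then g s else s)"

text \<open>beta : G3 \<rightarrow> Sym(EdgePos) records the permutation of the 12 edge positions:
the edge cubelet at position p is sent to the position of the image of any of its
stickers.\<close>
definition beta :: "(sticker \<Rightarrow> sticker) \<Rightarrow> (vec \<Rightarrow> vec)" where
  "beta g = (\<lambda>p. if p \<in> EdgePos then fst (g (p, SOME d. (p, d) \<in> EdgeStickers)) else p)"

definition kerPsi :: "(sticker \<Rightarrow> sticker) set" where
  "kerPsi = {g \<in> G3. psi g = id}"

definition A12 :: "(vec \<Rightarrow> vec) set" where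
  "A12 = {\<sigma>. \<sigma> permutes EdgePos \<and> evenperm \<sigma>}"

end

theory Submission
  imports Defs "HOL-Combinatorics.Cycles"
begin

text \<open>The kernel N of psi is normal in G3, so beta(N) is closed under conjugation by beta(G3).
The U-permutation R U' R U R U R U' R' U' R2 fixes every corner sticker and cycles the edges
UF -> UR -> UL, so beta(N) contains the 3-cycle (UF UR UL). Conjugating it by short move sequences
that fix UF and UR and carry UL to an arbitrary other edge k puts every 3-cycle (UF UR k) into
beta(N), and these 3-cycles generate the alternating group on the twelve edge positions.\<close>

section \<open>Even permutations from 3-cycles\<close>

lemma cycle3_rotate: "distinct [a, b, c] \<Longrightarrow> cycle_of_list [a, b, c] = cycle_of_list [b, c, a]"
  by (auto simp: fun_eq_iff transpose_def)

lemma cycle3_square: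
  "distinct [a, b, c] \<Longrightarrow> cycle_of_list [a, c, b] = cycle_of_list [a, b, c] \<circ> cycle_of_list [a, b, c]"
  by (auto simp: fun_eq_iff transpose_def)

lemma cycle3_split:
  "distinct [a, b, c, d] \<Longrightarrow> cycle_of_list [a, b, c] = cycle_of_list [a, d, c] \<circ> cycle_of_list [a, b, d]"
  by (auto simp: fun_eq_iff transpose_def)

locale transformation_monoid =
  fixes H :: "('a \<Rightarrow> 'a) set"
  assumes id_mem: "id \<in> H"
    and comp_mem: "f \<in> H \<Longrightarrow> g \<in> H \<Longrightarrow> f \<circ> g \<in> H"
begin

lemma cycle3_through_point:
  assumes pq: "p \<noteq> q" "p \<in> S" "q \<in> S"
    and family: "\<And>k. k \<in> S - {p, q} \<Longrightarrow> cycle_of_list [p, q, k] \<in> H"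
    and xy: "distinct [p, x, y]" "x \<in> S" "y \<in> S"
  shows "cycle_of_list [p, x, y] \<in> H"
proof -
  have inverse: "cycle_of_list [p, k, q] \<in> H" if "k \<in> S - {p, q}" for k
    using cycle3_square[of p q k] family[OF that] pq that comp_mem by auto
  consider "x = q" | "y = q" | "q \<notin> {x, y}" by blast
  then show ?thesis
  proof cases
    case 1 then show ?thesis using family xy by auto
  next
    case 2 then show ?thesis using inverse xy by auto
  next
    case 3
    then have "cycle_of_list [p, x, y] = cycle_of_list [p, q, y] \<circ> cycle_of_list [p, x, q]"
      using xy pq by (intro cycle3_split) auto
    then show ?thesis using family inverse comp_mem xy 3 by auto
  qed
qed

lemma cycle3_mem:
  assumes pq: "p \<noteq> q" "p \<in> S" "q \<in> S"
    and family: "\<And>k. k \<in> S - {p, q} \<Longrightarrow> cycle_of_list [p, q, k] \<in> H"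
    and xyz: "distinct [x, y, z]" "{x, y, z} \<subseteq> S"
  shows "cycle_of_list [x, y, z] \<in> H"
proof -
  have through_p: "cycle_of_list [p, u, v] \<in> H" if "distinct [p, u, v]" "u \<in> S" "v \<in> S" for u v
    using cycle3_through_point[OF pq family that] .
  show ?thesis
  proof (cases "x = p")
    case True then show ?thesis using through_p xyz by auto
  next
    case False
    have "cycle_of_list [x, p, k] \<in> H" if "k \<in> S - {x, p}" for k
    proof -
      have "cycle_of_list [x, p, k] = cycle_of_list [p, k, x]"
        using that False by (intro cycle3_rotate) auto
      then show ?thesis using through_p[of k x] that xyz False by auto
    qed
    then show ?thesis
      using cycle3_through_point[of x p S] False pq xyz by auto
  qed
qed

lemma transpose_pair_mem:
  assumes cycles: "\<And>x y z. distinct [x, y, z] \<Longrightarrow> {x, y, z} \<subseteq> S \<Longrightarrow> cycle_of_list [x, y, z] \<in> H"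
    and ab: "a \<noteq> b" and cd: "c \<noteq> d" and S: "{a, b, c, d} \<subseteq> S"
  shows "transpose a b \<circ> transpose c d \<in> H"
proof -
  have adjacent: "transpose x y \<circ> transpose y z \<in> H"
    if "x \<noteq> y" "y \<noteq> z" "{x, y, z} \<subseteq> S" for x y z
  proof (cases "x = z")
    case True
    then have "transpose x y \<circ> transpose y z = id"
      by (metis transpose_commute transpose_comp_involutory)
    then show ?thesis using id_mem by simp
  next
    case False
    then have "cycle_of_list [x, y, z] \<in> H" using that cycles by simp
    then show ?thesis by simp
  qed
  show ?thesis
  proof (cases "b = c")
    case True then show ?thesis using adjacent ab cd S by simp
  next
    case False
    have "transpose a b \<circ> transpose c d = (transpose a b \<circ> transpose b c) \<circ> (transpose b c \<circ> transpose c d)"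
      by (simp add: fun_eq_iff)
    moreover have "transpose a b \<circ> transpose b c \<in> H" "transpose b c \<circ> transpose c d \<in> H"
      using adjacent ab cd S False by auto
    ultimately show ?thesis using comp_mem by metis
  qed
qed

lemma evenperm_mem:
  assumes cycles: "\<And>x y z. distinct [x, y, z] \<Longrightarrow> {x, y, z} \<subseteq> S \<Longrightarrow> cycle_of_list [x, y, z] \<in> H"
    and "finite S" "\<sigma> permutes S" "evenperm \<sigma>"
  shows "\<sigma> \<in> H"
proof -
  have "(evenperm \<sigma> \<longrightarrow> \<sigma> \<in> H) \<and>
    (\<not> evenperm \<sigma> \<longrightarrow> (\<forall>a\<in>S. \<forall>b\<in>S. a \<noteq> b \<longrightarrow> transpose a b \<circ> \<sigma> \<in> H))"
    using assms(3,2)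
  proof (induction rule: permutes_induct)
    case id then show ?case using id_mem evenperm_id by blast
  next
    case (swap a b p)
    have "permutation p" using swap.hyps \<open>finite S\<close> by (simp add: permutes_imp_permutation)
    then have parity: "evenperm (transpose a b \<circ> p) \<longleftrightarrow> \<not> evenperm p"
      using swap.hyps by (simp add: evenperm_comp permutation_swap_id evenperm_swap)
    show ?case
    proof (cases "evenperm p")
      case True
      have "transpose c d \<circ> (transpose a b \<circ> p) \<in> H" if "c \<in> S" "d \<in> S" "c \<noteq> d" for c d
      proof -
        have "transpose c d \<circ> transpose a b \<in> H"
          using transpose_pair_mem[OF cycles] that swap.hyps by simp
        then show ?thesis using comp_mem swap.IH True by (simp add: comp_assoc[symmetric])
      qed
      then show ?thesis using parity True by blast
    next
      case False
      then show ?thesis using swap.IH swap.hyps parity by blast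
    qed
  qed
  then show ?thesis using \<open>evenperm \<sigma>\<close> by simp
qed

lemma evenperm_mem_of_cycle3_family:
  assumes "finite S" and pq: "p \<noteq> q" "p \<in> S" "q \<in> S"
    and family: "\<And>k. k \<in> S - {p, q} \<Longrightarrow> cycle_of_list [p, q, k] \<in> H"
    and "\<sigma> permutes S" "evenperm \<sigma>"
  shows "\<sigma> \<in> H"
  using evenperm_mem[OF cycle3_mem[OF pq family]] assms by blast

end

section \<open>The cube group G3\<close>

lemma rot_Pos: "n \<in> Axes \<Longrightarrow> p \<in> Pos \<Longrightarrow> rot n p \<in> Pos"
  by (cases p) (auto simp: Axes_def rot_def Pos_def)

lemma nz_rot: "n \<in> Axes \<Longrightarrow> nz (rot n p) = nz p"
  by (cases p) (auto simp: Axes_def rot_def)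

lemma rot_Axes: "n \<in> Axes \<Longrightarrow> d \<in> Axes \<Longrightarrow> rot n d \<in> Axes"
  by (auto simp: Axes_def rot_def)

lemma dot_rot_rot: "n \<in> Axes \<Longrightarrow> dot (rot n v) (rot n w) = dot v w"
  by (cases v; cases w) (auto simp: Axes_def rot_def algebra_simps)

lemma dot_rot_axis: "n \<in> Axes \<Longrightarrow> dot (rot n v) n = dot v n"
  by (cases v) (auto simp: Axes_def rot_def)

lemma rot_rot_rot_rot: "n \<in> Axes \<Longrightarrow> rot n (rot n (rot n (rot n v))) = v"
  by (cases v) (auto simp: Axes_def rot_def)

lemma rot_CornerStickers:
  "n \<in> Axes \<Longrightarrow> (p, d) \<in> CornerStickers \<Longrightarrow> (rot n p, rot n d) \<in> CornerStickers"
  by (auto simp: CornerStickers_def rot_Pos nz_rot rot_Axes dot_rot_rot)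

lemma rot_EdgeStickers:
  "n \<in> Axes \<Longrightarrow> (p, d) \<in> EdgeStickers \<Longrightarrow> (rot n p, rot n d) \<in> EdgeStickers"
  by (auto simp: EdgeStickers_def rot_Pos nz_rot rot_Axes dot_rot_rot)

lemma turn_CornerStickers: "n \<in> Axes \<Longrightarrow> s \<in> CornerStickers \<Longrightarrow> turn S n s \<in> CornerStickers"
  by (cases s) (simp add: turn_def rot_CornerStickers)

lemma turn_EdgeStickers: "n \<in> Axes \<Longrightarrow> s \<in> EdgeStickers \<Longrightarrow> turn S n s \<in> EdgeStickers"
  by (cases s) (simp add: turn_def rot_EdgeStickers)

lemma turn_Stickers: "n \<in> Axes \<Longrightarrow> s \<in> Stickers \<Longrightarrow> turn S n s \<in> Stickers"
  unfolding Stickers_def using turn_CornerStickers turn_EdgeStickers by blast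

lemma fst_turn: "s \<in> S \<Longrightarrow> fst (turn S n s) = (if dot (fst s) n = 1 then rot n (fst s) else fst s)"
  by (simp add: turn_def)

lemma turn_eq_turn_UNIV: "s \<in> S \<Longrightarrow> turn S n s = turn UNIV n s"
  by (simp add: turn_def)

lemma turn_turn_turn_turn:
  assumes n: "n \<in> Axes" shows "turn Stickers n (turn Stickers n (turn Stickers n (turn Stickers n s))) = s"
proof (cases "s \<in> Stickers \<and> dot (fst s) n = 1")
  case True
  obtain p d where s: "s = (p, d)" by (metis surj_pair)
  have rotate: "turn Stickers n (q, e) = (rot n q, rot n e) \<and> (rot n q, rot n e) \<in> Stickers \<and> dot (rot n q) n = 1"
    if "(q, e) \<in> Stickers" "dot q n = 1" for q e
    using that turn_Stickers[OF n that(1), of Stickers] by (simp add: turn_def dot_rot_axis n)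
  show ?thesis
    using True rotate[of p d] rotate[of "rot n p" "rot n d"] rotate[of "rot n (rot n p)" "rot n (rot n d)"]
      rotate[of "rot n (rot n (rot n p))" "rot n (rot n (rot n d))"]
    by (simp add: s rot_rot_rot_rot n)
next
  case False
  then have "turn Stickers n s = s" by (auto simp: turn_def)
  then show ?thesis by simp
qed

lemma G3_eq: "G3 = gen_group (turn Stickers ` Axes)"
proof -
  have "{u3, d3, f3, b3, l3, r3} = turn Stickers ` Axes"
    by (auto simp: u3_def d3_def f3_def b3_def l3_def r3_def nU_def nD_def nF_def nB_def nL_def nR_def
        Axes_def)
  then show ?thesis by (simp add: G3_def)
qed

lemma id_G3: "id \<in> G3"
  unfolding G3_eq by (rule gen_group.gen_id)

lemma turn_comp_G3: "g \<in> G3 \<Longrightarrow> n \<in> Axes \<Longrightarrow> turn Stickers n \<circ> g \<in> G3"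
  unfolding G3_eq by (auto intro: gen_group.gen_mult)

lemma inv_turn: "n \<in> Axes \<Longrightarrow> inv (turn Stickers n) = turn Stickers n \<circ> turn Stickers n \<circ> turn Stickers n"
  by (rule inv_unique_comp) (auto simp: fun_eq_iff turn_turn_turn_turn)

lemma G3_induct [consumes 1, case_names id turn]:
  assumes "g \<in> G3" and "P id" and turn: "\<And>g n. P g \<Longrightarrow> n \<in> Axes \<Longrightarrow> P (turn Stickers n \<circ> g)"
  shows "P g"
  using assms(1) unfolding G3_eq
proof (induction g rule: gen_group.induct)
  case gen_id then show ?case using assms(2) .
next
  case (gen_mult g m) then show ?case using turn by blast
next
  case (gen_inv g m)
  then obtain n where n: "n \<in> Axes" "m = turn Stickers n" by blast
  then have "inv m \<circ> g = turn Stickers n \<circ> (turn Stickers n \<circ> (turn Stickers n \<circ> g))"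
    by (simp add: inv_turn comp_assoc)
  then show ?case using turn gen_inv.IH n(1) by metis
qed

lemma G3_comp: "g \<in> G3 \<Longrightarrow> h \<in> G3 \<Longrightarrow> g \<circ> h \<in> G3"
  by (induction g rule: G3_induct) (simp_all add: turn_comp_G3 comp_assoc)

lemma G3_bij_inv: "g \<in> G3 \<Longrightarrow> bij g \<and> inv g \<in> G3"
proof (induction g rule: G3_induct)
  case id then show ?case using id_G3 by (metis bij_id inv_id)
next
  case (turn g n)
  let ?m = "turn Stickers n"
  have "(?m \<circ> ?m \<circ> ?m) \<circ> ?m = id" "?m \<circ> (?m \<circ> ?m \<circ> ?m) = id"
    using turn.hyps by (auto simp: fun_eq_iff turn_turn_turn_turn)
  then have "bij ?m" by (rule o_bij)
  moreover have "?m \<circ> (?m \<circ> (?m \<circ> id)) \<in> G3"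
    using turn.hyps by (intro turn_comp_G3 id_G3)
  then have "inv ?m \<in> G3"
    using turn.hyps by (simp add: inv_turn comp_assoc)
  ultimately have "bij (?m \<circ> g)" "inv (?m \<circ> g) = inv g \<circ> inv ?m"
    using turn.IH by (simp_all add: bij_comp o_inv_distrib)
  then show ?case
    using turn.IH \<open>inv ?m \<in> G3\<close> G3_comp by metis
qed

definition respects_cubelets :: "(sticker \<Rightarrow> sticker) \<Rightarrow> bool" where
  "respects_cubelets g \<longleftrightarrow> g ` CornerStickers \<subseteq> CornerStickers \<and> g ` EdgeStickers \<subseteq> EdgeStickers \<and>
     (\<forall>s\<in>EdgeStickers. \<forall>t\<in>EdgeStickers. fst s = fst t \<longrightarrow> fst (g s) = fst (g t))"

lemma respects_cubelets_CornerStickers: "respects_cubelets g \<Longrightarrow> s \<in> CornerStickers \<Longrightarrow> g s \<in> CornerStickers"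
  unfolding respects_cubelets_def by blast

lemma respects_cubelets_EdgeStickers: "respects_cubelets g \<Longrightarrow> s \<in> EdgeStickers \<Longrightarrow> g s \<in> EdgeStickers"
  unfolding respects_cubelets_def by blast

lemma respects_cubelets_fst:
  "respects_cubelets g \<Longrightarrow> s \<in> EdgeStickers \<Longrightarrow> t \<in> EdgeStickers \<Longrightarrow> fst s = fst t \<Longrightarrow>
    fst (g s) = fst (g t)"
  unfolding respects_cubelets_def by blast

lemma respects_cubelets_comp:
  assumes g: "respects_cubelets g" and h: "respects_cubelets h"
  shows "respects_cubelets (g \<circ> h)"
proof -
  have "(g \<circ> h) s \<in> CornerStickers" if "s \<in> CornerStickers" for s
    using that by (simp add: respects_cubelets_CornerStickers g h)
  moreover have "(g \<circ> h) s \<in> EdgeStickers" if "s \<in> EdgeStickers" for s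
    using that by (simp add: respects_cubelets_EdgeStickers g h)
  moreover have "fst ((g \<circ> h) s) = fst ((g \<circ> h) t)"
    if "s \<in> EdgeStickers" "t \<in> EdgeStickers" "fst s = fst t" for s t
    using respects_cubelets_fst[OF g respects_cubelets_EdgeStickers[OF h that(1)]
        respects_cubelets_EdgeStickers[OF h that(2)] respects_cubelets_fst[OF h that]]
    by simp
  ultimately show ?thesis unfolding respects_cubelets_def by blast
qed

lemma respects_cubelets_turn:
  assumes n: "n \<in> Axes" shows "respects_cubelets (turn Stickers n)"
proof -
  have "fst (turn Stickers n s) = fst (turn Stickers n t)"
    if "s \<in> EdgeStickers" "t \<in> EdgeStickers" "fst s = fst t" for s t
    using that by (simp add: fst_turn Stickers_def)
  then show ?thesis
    unfolding respects_cubelets_def using turn_CornerStickers[OF n] turn_EdgeStickers[OF n] by blast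
qed

lemma respects_cubelets_G3: "g \<in> G3 \<Longrightarrow> respects_cubelets g"
proof (induction g rule: G3_induct)
  case id then show ?case by (simp add: respects_cubelets_def)
next
  case (turn g n) then show ?case by (intro respects_cubelets_comp respects_cubelets_turn)
qed

section \<open>The edge permutation beta on G3\<close>

lemma EdgePos_has_sticker:
  assumes "p \<in> EdgePos" shows "\<exists>d. (p, d) \<in> EdgeStickers"
proof -
  obtain x y z where p: "p = (x, y, z)" by (metis prod_cases3)
  have "(p, (x, 0, 0)) \<in> EdgeStickers \<or> (p, (0, y, 0)) \<in> EdgeStickers"
    using assms by (auto simp: p EdgePos_def EdgeStickers_def Pos_def Axes_def split: if_splits)
  then show ?thesis by blast
qed

lemma beta_eq:
  assumes g: "respects_cubelets g" and pd: "(p, d) \<in> EdgeStickers"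
  shows "beta g p = fst (g (p, d))"
proof -
  have "(p, SOME d. (p, d) \<in> EdgeStickers) \<in> EdgeStickers" using pd by (rule someI)
  moreover have "p \<in> EdgePos" using pd by (auto simp: EdgeStickers_def EdgePos_def)
  ultimately show ?thesis
    using respects_cubelets_fst[OF g _ pd] by (simp add: beta_def)
qed

lemma beta_comp:
  assumes g: "respects_cubelets g" and h: "respects_cubelets h"
  shows "beta (g \<circ> h) = beta g \<circ> beta h"
proof
  fix p
  show "beta (g \<circ> h) p = (beta g \<circ> beta h) p"
  proof (cases "p \<in> EdgePos")
    case True
    then obtain d where d: "(p, d) \<in> EdgeStickers" using EdgePos_has_sticker by blast
    obtain q e where qe: "h (p, d) = (q, e)" by (metis surj_pair)
    have "(q, e) \<in> EdgeStickers" using respects_cubelets_EdgeStickers[OF h d] qe by simp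
    then have "beta g q = fst (g (h (p, d)))" using beta_eq[OF g] qe by simp
    moreover have "beta h p = q" using beta_eq[OF h d] qe by simp
    ultimately show ?thesis using beta_eq[OF respects_cubelets_comp[OF g h] d] by simp
  next
    case False
    then show ?thesis by (simp add: beta_def)
  qed
qed

lemma beta_id: "beta id = id"
  by (simp add: beta_def fun_eq_iff)

lemma beta_G3_bij_inv:
  assumes "g \<in> G3" shows "bij (beta g) \<and> beta (inv g) = inv (beta g)"
proof -
  have g: "respects_cubelets g" "respects_cubelets (inv g)"
    using assms G3_bij_inv respects_cubelets_G3 by blast+
  have "bij g" using assms G3_bij_inv by blast
  then have "inv g \<circ> g = id" "g \<circ> inv g = id"
    by (metis bij_is_inj inj_iff, metis bij_is_surj surj_iff)
  then have "beta (inv g) \<circ> beta g = id" "beta g \<circ> beta (inv g) = id"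
    using beta_comp[OF g(2,1)] beta_comp[OF g] beta_id by simp_all
  then show ?thesis using o_bij inv_unique_comp by metis
qed

lemma kerPsi_iff: "g \<in> kerPsi \<longleftrightarrow> g \<in> G3 \<and> (\<forall>s\<in>CornerStickers. g s = s)"
  by (auto simp: kerPsi_def psi_def fun_eq_iff)

lemma kerPsi_conj:
  assumes g: "g \<in> G3" and h: "h \<in> kerPsi"
  shows "g \<circ> h \<circ> inv g \<in> kerPsi"
proof -
  have "bij g" "inv g \<in> G3" using G3_bij_inv[OF g] by blast+
  have "(g \<circ> h \<circ> inv g) s = s" if "s \<in> CornerStickers" for s
  proof -
    have "inv g s \<in> CornerStickers"
      using respects_cubelets_CornerStickers[OF respects_cubelets_G3[OF \<open>inv g \<in> G3\<close>] that] .
    then show ?thesis using h \<open>bij g\<close> by (simp add: kerPsi_iff bij_is_surj surj_f_inv_f)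
  qed
  moreover have "g \<circ> h \<circ> inv g \<in> G3"
    using g h \<open>inv g \<in> G3\<close> by (simp add: kerPsi_iff G3_comp)
  ultimately show ?thesis by (simp add: kerPsi_iff)
qed

lemma transformation_monoid_beta_kerPsi: "transformation_monoid (beta ` kerPsi)"
proof
  show "id \<in> beta ` kerPsi"
    using beta_id id_G3 by (force simp: kerPsi_iff)
next
  fix \<sigma> \<tau> assume "\<sigma> \<in> beta ` kerPsi" "\<tau> \<in> beta ` kerPsi"
  then obtain g h where "g \<in> kerPsi" "h \<in> kerPsi" "\<sigma> = beta g" "\<tau> = beta h" by blast
  moreover have "g \<circ> h \<in> kerPsi" using \<open>g \<in> kerPsi\<close> \<open>h \<in> kerPsi\<close> by (simp add: kerPsi_iff G3_comp)
  ultimately show "\<sigma> \<circ> \<tau> \<in> beta ` kerPsi"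
    using beta_comp respects_cubelets_G3 kerPsi_iff by (metis image_eqI)
qed

lemma cycle_conjugate_in_beta_kerPsi:
  assumes g: "g \<in> G3" and cs: "distinct cs" "cycle_of_list cs \<in> beta ` kerPsi"
  shows "cycle_of_list (map (beta g) cs) \<in> beta ` kerPsi"
proof -
  obtain h where h: "h \<in> kerPsi" "beta h = cycle_of_list cs" using cs(2) by (metis imageE)
  have "inv g \<in> G3" "h \<in> G3" using G3_bij_inv[OF g] h(1) by (auto simp: kerPsi_iff)
  then have "beta (g \<circ> h \<circ> inv g) = beta g \<circ> cycle_of_list cs \<circ> inv (beta g)"
    using g h(2) beta_G3_bij_inv[OF g] by (simp add: beta_comp respects_cubelets_G3 G3_comp)
  also have "\<dots> = cycle_of_list (map (beta g) cs)"
    using conjugation_of_cycle cs(1) beta_G3_bij_inv[OF g] by blast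
  finally show ?thesis using kerPsi_conj[OF g h(1)] by (metis image_eqI)
qed

section \<open>Edge 3-cycles in the kernel of psi\<close>

text \<open>turns S [n1, n2, n3] performs the turn about n3 first. With S = UNIV no membership
test is needed, which makes the concrete evaluations below cheap.\<close>

definition turns :: "sticker set \<Rightarrow> vec list \<Rightarrow> sticker \<Rightarrow> sticker" where
  "turns S ns = foldr (\<lambda>n g. turn S n \<circ> g) ns id"

lemma turns_Nil [simp]: "turns S [] = id"
  by (simp add: turns_def)

lemma turns_Cons [simp]: "turns S (n # ns) = turn S n \<circ> turns S ns"
  by (simp add: turns_def)

lemma turns_G3: "set ns \<subseteq> Axes \<Longrightarrow> turns Stickers ns \<in> G3"
  by (induction ns) (simp_all add: id_G3 turn_comp_G3)

lemma turns_Stickers: "set ns \<subseteq> Axes \<Longrightarrow> s \<in> Stickers \<Longrightarrow> turns S ns s \<in> Stickers"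
  by (induction ns) (simp_all add: turn_Stickers)

lemma turns_eq_turns_UNIV: "set ns \<subseteq> Axes \<Longrightarrow> s \<in> Stickers \<Longrightarrow> turns Stickers ns s = turns UNIV ns s"
proof (induction ns)
  case Nil then show ?case by simp
next
  case (Cons n ns)
  then have "turns UNIV ns s \<in> Stickers" by (simp add: turns_Stickers)
  then show ?case using Cons by (simp add: turn_eq_turn_UNIV[of _ Stickers])
qed

lemma beta_turns:
  "set ns \<subseteq> Axes \<Longrightarrow> (p, d) \<in> EdgeStickers \<Longrightarrow>
    beta (turns Stickers ns) p = fst (turns UNIV ns (p, d))"
  using beta_eq[OF respects_cubelets_G3[OF turns_G3]] turns_eq_turns_UNIV by (simp add: Stickers_def)

lemma axis_of_dot_eq_1:
  assumes "d \<in> Axes" "dot (x, y, z) d = 1"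
  shows "d \<in> {(x, 0, 0), (0, y, 0), (0, 0, z)}"
  using assms unfolding Axes_def by (elim insertE emptyE) auto

lemma CornerStickers_cases:
  assumes "((x, y, z), d) \<in> CornerStickers"
  shows "x \<in> {-1, 1}" "y \<in> {-1, 1}" "z \<in> {-1, 1}" "d \<in> {(x, 0, 0), (0, y, 0), (0, 0, z)}"
  using assms axis_of_dot_eq_1 by (auto simp: CornerStickers_def Pos_def split: if_splits)

lemma EdgePos_cases:
  assumes "(x, y, z) \<in> EdgePos"
  shows "x = 0 \<and> y \<in> {-1, 1} \<and> z \<in> {-1, 1} \<or> y = 0 \<and> x \<in> {-1, 1} \<and> z \<in> {-1, 1} \<or>
    z = 0 \<and> x \<in> {-1, 1} \<and> y \<in> {-1, 1}"
  using assms by (auto simp: EdgePos_def Pos_def split: if_splits)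

lemma EdgeStickers_cases:
  assumes "((x, y, z), d) \<in> EdgeStickers"
  shows "x = 0 \<and> y \<in> {-1, 1} \<and> z \<in> {-1, 1} \<and> d \<in> {(0, y, 0), (0, 0, z)} \<or>
         y = 0 \<and> x \<in> {-1, 1} \<and> z \<in> {-1, 1} \<and> d \<in> {(x, 0, 0), (0, 0, z)} \<or>
         z = 0 \<and> x \<in> {-1, 1} \<and> y \<in> {-1, 1} \<and> d \<in> {(x, 0, 0), (0, y, 0)}"
  using assms axis_of_dot_eq_1[of d x y z] by (auto simp: EdgeStickers_def Pos_def split: if_splits)

lemma finite_EdgePos: "finite EdgePos"
proof -
  have "Pos \<subseteq> {-1, 0, 1} \<times> {-1, 0, 1} \<times> {-1, 0, 1}" by (auto simp: Pos_def simp del: insert_iff)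
  then have "finite Pos" by (rule finite_subset) simp
  then show ?thesis unfolding EdgePos_def by simp
qed

lemma face_normals_Axes: "{nU, nD, nF, nB, nL, nR} \<subseteq> Axes"
  by (simp add: Axes_def nU_def nD_def nF_def nB_def nL_def nR_def)

definition UF :: vec where "UF = (0, 1, 1)"
definition UR :: vec where "UR = (1, 1, 0)"
definition UL :: vec where "UL = (-1, 1, 0)"

lemma UF_UR_UL_EdgePos: "UF \<in> EdgePos" "UR \<in> EdgePos" "UL \<in> EdgePos"
  by (simp_all add: UF_def UR_def UL_def EdgePos_def Pos_def)

text \<open>In move notation, read from the end of the list: R U' R U R U R U' R' U' R2.\<close>

definition edge_cycle_word :: "vec list" where
  "edge_cycle_word = [nR, nR, nU, nU, nU, nR, nR, nR, nU, nU, nU, nR, nU, nR, nU, nR, nU, nU, nU, nR]"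

lemma edge_cycle_word_fixes_corners:
  assumes "s \<in> CornerStickers" shows "turns UNIV edge_cycle_word s = s"
proof -
  obtain x y z d where s: "s = ((x, y, z), d)" by (metis prod_cases3 surj_pair)
  show ?thesis
    using CornerStickers_cases[OF assms[unfolded s]] unfolding s
    by (elim insertE emptyE; simp add: edge_cycle_word_def turn_def rot_def nR_def nU_def)
qed

lemma edge_cycle_word_on_edges:
  assumes "s \<in> EdgeStickers"
  shows "fst (turns UNIV edge_cycle_word s) = cycle_of_list [UF, UR, UL] (fst s)"
proof -
  obtain x y z d where s: "s = ((x, y, z), d)" by (metis prod_cases3 surj_pair)
  show ?thesis
    using EdgeStickers_cases[OF assms[unfolded s]] unfolding s
    by (elim disjE conjE insertE emptyE;
        simp add: edge_cycle_word_def turn_def rot_def nR_def nU_def UF_def UR_def UL_def)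
qed

lemma edge_cycle_in_beta_kerPsi: "cycle_of_list [UF, UR, UL] \<in> beta ` kerPsi"
proof -
  let ?g = "turns Stickers edge_cycle_word"
  have ns: "set edge_cycle_word \<subseteq> Axes" using face_normals_Axes by (simp add: edge_cycle_word_def)
  have "?g \<in> kerPsi"
    using turns_G3[OF ns] turns_eq_turns_UNIV[OF ns] edge_cycle_word_fixes_corners
    by (simp add: kerPsi_iff Stickers_def)
  moreover have "beta ?g p = cycle_of_list [UF, UR, UL] p" for p
  proof (cases "p \<in> EdgePos")
    case True
    then obtain d where d: "(p, d) \<in> EdgeStickers" using EdgePos_has_sticker by blast
    show ?thesis using beta_turns[OF ns d] edge_cycle_word_on_edges[OF d] by simp
  next
    case False
    then have "p \<notin> set [UF, UR, UL]" using UF_UR_UL_EdgePos by auto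
    then show ?thesis using False by (simp add: beta_def id_outside_supp)
  qed
  ultimately show ?thesis by (metis image_eqI ext)
qed

text \<open>Each word fixes UF and UR and moves UL to the edge position it is paired with.\<close>

definition setup_words :: "(vec \<times> vec list) list" where
  "setup_words =
    [((-1, -1, 0), [nL, nL]), ((-1, 0, -1), [nL, nL, nL]), ((-1, 0, 1), [nL]), ((-1, 1, 0), []),
     ((0, -1, -1), [nB, nL, nL, nL]), ((0, -1, 1), [nD, nL, nL]), ((0, 1, -1), [nR, nF, nL, nU]),
     ((1, -1, 0), [nD, nD, nL, nL]), ((1, 0, -1), [nU, nU, nR, nU, nU]), ((1, 0, 1), [nU, nF, nU, nU, nU])]"

lemma setup_words_cover:
  assumes "k \<in> EdgePos - {UF, UR}" shows "k \<in> fst ` set setup_words"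
proof -
  obtain x y z where k: "k = (x, y, z)" by (metis prod_cases3)
  have "(x, y, z) \<in> EdgePos" "(x, y, z) \<notin> {UF, UR}" using assms k by simp_all
  with EdgePos_cases[OF this(1)] show ?thesis
    unfolding k by (elim disjE conjE insertE emptyE; simp add: setup_words_def UF_def UR_def)
qed

lemma setup_words_Axes: "(k, ns) \<in> set setup_words \<Longrightarrow> set ns \<subseteq> Axes"
  using face_normals_Axes unfolding setup_words_def by auto

lemma setup_words_move:
  assumes "(k, ns) \<in> set setup_words"
  shows "map (\<lambda>p. fst (turns UNIV ns (p, nU))) [UF, UR, UL] = [UF, UR, k]"
proof -
  have "list_all (\<lambda>(k, ns). map (\<lambda>p. fst (turns UNIV ns (p, nU))) [UF, UR, UL] = [UF, UR, k]) setup_words"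
    by (simp add: setup_words_def turn_def rot_def nU_def nD_def nF_def nB_def nL_def nR_def
        UF_def UR_def UL_def)
  then show ?thesis using assms by (auto simp: list_all_iff)
qed

lemma cycle_UF_UR_in_beta_kerPsi:
  assumes "k \<in> EdgePos - {UF, UR}" shows "cycle_of_list [UF, UR, k] \<in> beta ` kerPsi"
proof -
  obtain ns where ns: "(k, ns) \<in> set setup_words" using setup_words_cover[OF assms] by force
  have edges: "(UF, nU) \<in> EdgeStickers" "(UR, nU) \<in> EdgeStickers" "(UL, nU) \<in> EdgeStickers"
    by (simp_all add: UF_def UR_def UL_def nU_def EdgeStickers_def Pos_def Axes_def)
  have "map (beta (turns Stickers ns)) [UF, UR, UL] = [UF, UR, k]"
    using setup_words_Axes[OF ns] setup_words_move[OF ns] beta_turns[OF _ edges(1)] beta_turns[OF _ edges(2)]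
      beta_turns[OF _ edges(3)]
    by simp
  moreover have "distinct [UF, UR, UL]" by (simp add: UF_def UR_def UL_def)
  ultimately show ?thesis
    using cycle_conjugate_in_beta_kerPsi[OF turns_G3[OF setup_words_Axes[OF ns]] _ edge_cycle_in_beta_kerPsi] by metis
qed

theorem proposition3p2:
  shows "A12 \<subseteq> beta ` kerPsi"
proof
  interpret transformation_monoid "beta ` kerPsi" by (rule transformation_monoid_beta_kerPsi)
  fix \<sigma> assume "\<sigma> \<in> A12"
  then have "\<sigma> permutes EdgePos" "evenperm \<sigma>" by (simp_all add: A12_def)
  moreover have "UF \<noteq> UR" by (simp add: UF_def UR_def)
  ultimately show "\<sigma> \<in> beta ` kerPsi"
    using evenperm_mem_of_cycle3_family[OF finite_EdgePos] UF_UR_UL_EdgePos cycle_UF_UR_in_beta_kerPsi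
    by blast
qed

end
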